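(* Consider a convex $n$-gon with vertices $0,\dots,n-1$ in cyclic order, and integers $0<a<b<c<n-1$. Let $V_R=\{0,\dots,a-1\}$, $V_B=\{a,\dots,b-1\}$, $V_L=\{b,\dots,c-1\}$, $V_T=\{c,\dots,n-1\}$. Let $B_Q$ be the set of all edges $(i,j)$ with $i\in V_R$, $j\in V_L$, together with all edges $(i,j)$ with $i\in V_T$, $j\in V_B$. Then $B_Q$ is an $(n,m)$-blocker with $m=|V_R|\cdot|V_L|+|V_T|\cdot|V_B|$.
   Context: An edge $(i,j)$ is the segment between vertices $i,j$; boundary edges are $(i,i+1)$ (indices mod $n$), diagonals are the other edges. Two edges cross if they share an interior point. A triangulation is a maximal set of pairwise non-crossing diagonals. A blocker is a set $B$ of diagonals having a diagonal in common with every triangulation; it is saturated if for every $e\in B$, $B\setminus\{e\}$ is not a blocker. An $(n,k)$-blocker is a saturated blocker of size $k$ for a convex $n$-gon. *)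

theory Defs
  imports Main
begin

text \<open>For vertices in convex position, two edges
share an interior point iff their endpoints are four distinct vertices that
strictly interleave in the cyclic order.\<close>

definition is_diagonal :: "nat \<Rightarrow> nat set \<Rightarrow> bool" where
  "is_diagonal n e \<longleftrightarrow>
     (\<exists>i j. e = {i, j} \<and> i < j \<and> j < n \<and> j \<noteq> i + 1 \<and> \<not> (i = 0 \<and> j = n - 1))"

definition diagonals :: "nat \<Rightarrow> nat set set" where
  "diagonals n = {e. is_diagonal n e}"

definition crosses :: "nat set \<Rightarrow> nat set \<Rightarrow> bool" where
  "crosses e f \<longleftrightarrow>
     (\<exists>i j k l. i < k \<and> k < j \<and> j < l \<and>
        ((e = {i, j} \<and> f = {k, l}) \<or> (e = {k, l} \<and> f = {i, j})))"

definition noncrossing :: "nat set set \<Rightarrow> bool" where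
  "noncrossing S \<longleftrightarrow> (\<forall>e\<in>S. \<forall>f\<in>S. \<not> crosses e f)"

definition triangulation :: "nat \<Rightarrow> nat set set \<Rightarrow> bool" where
  "triangulation n T \<longleftrightarrow>
     T \<subseteq> diagonals n \<and> noncrossing T \<and>
     (\<forall>S. T \<subseteq> S \<and> S \<subseteq> diagonals n \<and> noncrossing S \<longrightarrow> S = T)"

definition blocker :: "nat \<Rightarrow> nat set set \<Rightarrow> bool" where
  "blocker n B \<longleftrightarrow> B \<subseteq> diagonals n \<and> (\<forall>T. triangulation n T \<longrightarrow> B \<inter> T \<noteq> {})"

definition saturated_blocker :: "nat \<Rightarrow> nat set set \<Rightarrow> bool" where
  "saturated_blocker n B \<longleftrightarrow> blocker n B \<and> (\<forall>e\<in>B. \<not> blocker n (B - {e}))"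

definition nk_blocker :: "nat \<Rightarrow> nat \<Rightarrow> nat set set \<Rightarrow> bool" where
  "nk_blocker n k B \<longleftrightarrow> saturated_blocker n B \<and> finite B \<and> card B = k"

end

theory Submission
  imports Defs
begin

text \<open>
  A triangulation T avoiding B_Q is impossible: let x be the last vertex of V_R joined in T
  to V_T (or x = 0) and y the last vertex of V_L joined in T to V_B (or y = b). An edge of T
  crossing {x, y} would either join V_R to V_L or V_T to V_B, or contradict the choice of x
  or y, or cross the edge of T realising x or y. So {x, y} crosses nothing in T, and
  maximality puts it into T, although it lies in B_Q.

  Saturation: for e = {x, y} with x in V_R and y in V_L, the quadrilateral x, a, y, c with
  diagonal e is noncrossing, and every other edge of B_Q crosses one of its five edges, so any
  triangulation containing it misses B_Q - {e}. For e joining u in V_B to z in V_T the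
  quadrilateral 0, u, b, z with diagonal e does the same.
\<close>

lemma crosses_doubleton_iff:
  assumes "i < j" "k < l"
  shows "crosses {i, j} {k, l} \<longleftrightarrow> (i < k \<and> k < j \<and> j < l) \<or> (k < i \<and> i < l \<and> l < j)"
  using assms unfolding crosses_def doubleton_eq_iff by auto

lemma crosses_commute: "crosses e f \<longleftrightarrow> crosses f e"
  unfolding crosses_def by blast

lemma not_crosses_self: "\<not> crosses e e"
  unfolding crosses_def doubleton_eq_iff by auto

lemma noncrossingD: "noncrossing S \<Longrightarrow> e \<in> S \<Longrightarrow> f \<in> S \<Longrightarrow> \<not> crosses e f"
  unfolding noncrossing_def by blast

lemma noncrossing_subset: "noncrossing S \<Longrightarrow> S' \<subseteq> S \<Longrightarrow> noncrossing S'"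
  unfolding noncrossing_def by blast

lemma in_diagonalsE:
  assumes "e \<in> diagonals n"
  obtains i j where "e = {i, j}" "i < j" "j < n"
  using assms unfolding diagonals_def is_diagonal_def by auto

lemma doubleton_in_diagonalsI:
  "i < j \<Longrightarrow> j < n \<Longrightarrow> j \<noteq> i + 1 \<Longrightarrow> \<not> (i = 0 \<and> j = n - 1) \<Longrightarrow> {i, j} \<in> diagonals n"
  unfolding diagonals_def is_diagonal_def by blast

lemma diagonals_subset_lessThan: "e \<in> diagonals n \<Longrightarrow> e \<subseteq> {..<n}"
  by (auto elim: in_diagonalsE)

lemma finite_diagonals: "finite (diagonals n)"
  by (rule finite_subset[of _ "Pow {..<n}"]) (auto dest: diagonals_subset_lessThan)

lemma crossing_edge_in_diagonals:
  assumes "crosses e f" "e \<subseteq> {..<n}" "f \<subseteq> {..<n}"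
  shows "f \<in> diagonals n"
proof -
  obtain i j k l where "i < k" "k < j" "j < l"
    and "(e = {i, j} \<and> f = {k, l}) \<or> (e = {k, l} \<and> f = {i, j})"
    using assms(1) unfolding crosses_def by blast
  then show ?thesis
    using assms(2,3) by (auto intro!: doubleton_in_diagonalsI)
qed

lemma noncrossing_extends_to_triangulation:
  assumes "S \<subseteq> diagonals n" "noncrossing S"
  obtains T where "triangulation n T" "S \<subseteq> T"
proof -
  let ?F = "{T. S \<subseteq> T \<and> T \<subseteq> diagonals n \<and> noncrossing T}"
  have "S \<in> ?F" using assms by blast
  moreover have "\<forall>T. T \<in> ?F \<longrightarrow> card T < Suc (card (diagonals n))"
    using finite_diagonals by (simp add: card_mono le_imp_less_Suc)
  ultimately have "\<exists>T. T \<in> ?F \<and> (\<forall>T'. T' \<in> ?F \<longrightarrow> card T' \<le> card T)"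
    by (rule Lattices_Big.ex_has_greatest_nat)
  then obtain T where T: "T \<in> ?F" and T_max: "\<forall>T'. T' \<in> ?F \<longrightarrow> card T' \<le> card T"
    by blast
  have "triangulation n T"
    unfolding triangulation_def
  proof (intro conjI allI impI)
    show "T \<subseteq> diagonals n" "noncrossing T" using T by simp_all
    fix T' assume T': "T \<subseteq> T' \<and> T' \<subseteq> diagonals n \<and> noncrossing T'"
    then have "card T' \<le> card T" using T T_max by auto
    moreover have "finite T'" using T' finite_diagonals finite_subset by blast
    ultimately show "T' = T" using T' card_seteq by blast
  qed
  with T show thesis using that by blast
qed

lemma uncrossed_diagonal_in_triangulation:
  assumes "triangulation n T" "d \<in> diagonals n" "\<And>f. f \<in> T \<Longrightarrow> \<not> crosses d f"
  shows "d \<in> T"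
proof -
  have "noncrossing (insert d T)"
    using assms unfolding triangulation_def noncrossing_def
    by (auto simp: not_crosses_self crosses_commute[of _ d])
  then have "insert d T = T"
    using assms(1,2) unfolding triangulation_def by (metis insert_subset subset_insertI)
  then show ?thesis by blast
qed

lemma not_blocker_if_crossed_by_noncrossing:
  assumes "S \<subseteq> diagonals n" "noncrossing S" "\<And>f. f \<in> B \<Longrightarrow> \<exists>g\<in>S. crosses f g"
  shows "\<not> blocker n B"
proof
  assume "blocker n B"
  obtain T where T: "triangulation n T" "S \<subseteq> T"
    by (rule noncrossing_extends_to_triangulation[OF assms(1,2)])
  with \<open>blocker n B\<close> obtain f where "f \<in> B" "f \<in> T"
    unfolding blocker_def by blast
  then obtain g where "g \<in> T" "crosses f g" using assms(3) T(2) by blast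
  moreover have "noncrossing T" using T(1) by (simp add: triangulation_def)
  ultimately show False using \<open>f \<in> T\<close> noncrossingD by blast
qed

lemma noncrossing_quadrilateral:
  fixes p1 p2 p3 p4 :: nat
  assumes "p1 < p2" "p2 < p3" "p3 < p4" and "d = {p1, p3} \<or> d = {p2, p4}"
  shows "noncrossing {{p1, p2}, {p2, p3}, {p3, p4}, {p1, p4}, d}"
  using assms unfolding noncrossing_def by (auto simp: crosses_doubleton_iff)

lemma not_blocker_if_crossed_by_quadrilateral:
  fixes p1 p2 p3 p4 :: nat
  assumes "p1 < p2" "p2 < p3" "p3 < p4" "p4 < n" and "d = {p1, p3} \<or> d = {p2, p4}"
    and "B \<subseteq> diagonals n"
    and "\<And>f. f \<in> B \<Longrightarrow> \<exists>g\<in>{{p1, p2}, {p2, p3}, {p3, p4}, {p1, p4}, d}. crosses f g"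
  shows "\<not> blocker n B"
proof -
  let ?Q = "{{p1, p2}, {p2, p3}, {p3, p4}, {p1, p4}, d}"
  have "noncrossing (?Q \<inter> diagonals n)"
    using noncrossing_quadrilateral[OF assms(1-3,5)] by (rule noncrossing_subset) blast
  moreover have "\<exists>g\<in>?Q \<inter> diagonals n. crosses f g" if "f \<in> B" for f
  proof -
    obtain g where "g \<in> ?Q" "crosses f g" using assms(7) \<open>f \<in> B\<close> by blast
    moreover have "g \<subseteq> {..<n}" using \<open>g \<in> ?Q\<close> assms(1-5) by auto
    moreover have "f \<subseteq> {..<n}" using assms(6) \<open>f \<in> B\<close> diagonals_subset_lessThan by blast
    ultimately show ?thesis using crossing_edge_in_diagonals by blast
  qed
  ultimately show ?thesis
    by (intro not_blocker_if_crossed_by_noncrossing[of "?Q \<inter> diagonals n"]) auto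
qed

lemma ex_last_in_interval:
  fixes d m :: nat
  assumes "d < m"
  obtains x where "d \<le> x" "x < m" "x = d \<or> P x" "\<And>k. x < k \<Longrightarrow> k < m \<Longrightarrow> \<not> P k"
proof -
  let ?Q = "\<lambda>k. d \<le> k \<and> k < m \<and> (k = d \<or> P k)"
  have "\<exists>x. ?Q x \<and> (\<forall>k. ?Q k \<longrightarrow> k \<le> x)"
    by (rule Nat.ex_has_greatest_nat[of ?Q d m]) (use assms in auto)
  then obtain x where x: "?Q x" and x_max: "\<forall>k. ?Q k \<longrightarrow> k \<le> x"
    by blast
  show thesis
  proof (rule that)
    show "\<not> P k" if "x < k" "k < m" for k
      using that x x_max[rule_format, of k] by auto
  qed (use x in auto)
qed

definition BQ :: "nat \<Rightarrow> nat \<Rightarrow> nat \<Rightarrow> nat \<Rightarrow> nat set set" where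
  "BQ n a b c = {{i, j} | i j. i \<in> {0..<a} \<and> j \<in> {b..<c}} \<union>
                {{i, j} | i j. i \<in> {c..<n} \<and> j \<in> {a..<b}}"

lemma BQ_RL_memI: "i < a \<Longrightarrow> b \<le> j \<Longrightarrow> j < c \<Longrightarrow> {i, j} \<in> BQ n a b c"
  unfolding BQ_def by auto

lemma BQ_TB_memI: "a \<le> i \<Longrightarrow> i < b \<Longrightarrow> c \<le> j \<Longrightarrow> j < n \<Longrightarrow> {i, j} \<in> BQ n a b c"
  unfolding BQ_def by (auto simp: insert_commute)

lemma BQ_memE:
  assumes "e \<in> BQ n a b c"
  obtains (RL) i j where "e = {i, j}" "i < a" "b \<le> j" "j < c"
    | (TB) i j where "e = {i, j}" "a \<le> i" "i < b" "c \<le> j" "j < n"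
  using assms unfolding BQ_def by (auto simp: insert_commute)

lemma BQ_subset_diagonals:
  assumes "0 < a" "a < b" "b < c" "c < n - 1"
  shows "BQ n a b c \<subseteq> diagonals n"
proof
  fix e assume "e \<in> BQ n a b c"
  then show "e \<in> diagonals n"
    by (cases rule: BQ_memE) (use assms in \<open>auto intro: doubleton_in_diagonalsI\<close>)
qed

lemma extremal_RL_diagonal_uncrossed:
  assumes "a < b" "b < c" and T: "T \<subseteq> diagonals n" "noncrossing T" "BQ n a b c \<inter> T = {}"
    and x: "x < a" "x = 0 \<or> (\<exists>l\<ge>c. {x, l} \<in> T)"
      "\<And>k. x < k \<Longrightarrow> k < a \<Longrightarrow> \<not> (\<exists>l\<ge>c. {k, l} \<in> T)"
    and y: "b \<le> y" "y < c" "y = b \<or> (\<exists>k. a \<le> k \<and> k < b \<and> {k, y} \<in> T)"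
      "\<And>l. y < l \<Longrightarrow> l < c \<Longrightarrow> \<not> (\<exists>k. a \<le> k \<and> k < b \<and> {k, l} \<in> T)"
    and "f \<in> T"
  shows "\<not> crosses {x, y} f"
proof
  assume "crosses {x, y} f"
  have no_RL: "{k, l} \<notin> T" if "k < a" "b \<le> l" "l < c" for k l
    using T(3) BQ_RL_memI[OF that] by blast
  have no_TB: "{k, l} \<notin> T" if "a \<le> k" "k < b" "c \<le> l" "l < n" for k l
    using T(3) BQ_TB_memI[OF that] by blast
  obtain k l where f: "f = {k, l}" "k < l" "l < n"
    using \<open>f \<in> T\<close> T(1) by (blast elim: in_diagonalsE)
  have "x < y" using x y assms by linarith
  from \<open>crosses {x, y} f\<close> consider "x < k" "k < y" "y < l" | "k < x" "x < l" "l < y"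
    unfolding f crosses_doubleton_iff[OF \<open>x < y\<close> \<open>k < l\<close>] by blast
  then show False
  proof cases
    case 1
    consider "k < a" "c \<le> l" | "k < a" "l < c" | "a \<le> k" "k < b" "l < c"
      | "a \<le> k" "k < b" "c \<le> l" | "b \<le> k"
      by linarith
    then show False
    proof cases
      case 5
      then obtain k' where "a \<le> k'" "k' < b" "{k', y} \<in> T" using y 1 by auto
      moreover have "crosses {k', y} {k, l}"
        using calculation 1 5 by (simp add: crosses_doubleton_iff)
      ultimately show False using T(2) \<open>f \<in> T\<close> f noncrossingD by blast
    qed (use 1 f \<open>f \<in> T\<close> x y no_RL no_TB in auto)
  next
    case 2
    then obtain l' where "c \<le> l'" "{x, l'} \<in> T" using x by auto
    moreover have "crosses {k, l} {x, l'}"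
      using calculation 2 y by (simp add: crosses_doubleton_iff)
    ultimately show False using T(2) \<open>f \<in> T\<close> f noncrossingD by blast
  qed
qed

lemma BQ_meets_triangulation:
  assumes "0 < a" "a < b" "b < c" "c < n - 1" and T: "triangulation n T"
  shows "BQ n a b c \<inter> T \<noteq> {}"
proof
  assume disjoint: "BQ n a b c \<inter> T = {}"
  have T_diag: "T \<subseteq> diagonals n" and T_nc: "noncrossing T"
    using T unfolding triangulation_def by auto
  obtain x where x: "x < a" "x = 0 \<or> (\<exists>l\<ge>c. {x, l} \<in> T)"
    "\<And>k. x < k \<Longrightarrow> k < a \<Longrightarrow> \<not> (\<exists>l\<ge>c. {k, l} \<in> T)"
    by (rule ex_last_in_interval[OF \<open>0 < a\<close>, where P = "\<lambda>k. \<exists>l\<ge>c. {k, l} \<in> T"]) blast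
  obtain y where y: "b \<le> y" "y < c" "y = b \<or> (\<exists>k. a \<le> k \<and> k < b \<and> {k, y} \<in> T)"
    "\<And>l. y < l \<Longrightarrow> l < c \<Longrightarrow> \<not> (\<exists>k. a \<le> k \<and> k < b \<and> {k, l} \<in> T)"
    by (rule ex_last_in_interval[OF \<open>b < c\<close>, where P = "\<lambda>l. \<exists>k. a \<le> k \<and> k < b \<and> {k, l} \<in> T"]) blast
  have "{x, y} \<in> diagonals n"
    using x y assms by (intro doubleton_in_diagonalsI) auto
  moreover have "\<not> crosses {x, y} f" if "f \<in> T" for f
    using extremal_RL_diagonal_uncrossed[OF \<open>a < b\<close> \<open>b < c\<close> T_diag T_nc disjoint x y that] .
  ultimately have "{x, y} \<in> T" using T uncrossed_diagonal_in_triangulation by blast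
  moreover have "{x, y} \<in> BQ n a b c" using x y by (intro BQ_RL_memI)
  ultimately show False using disjoint by blast
qed

lemma BQ_minus_RL_not_blocker:
  assumes "0 < a" "a < b" "b < c" "c < n - 1" "x < a" "b \<le> y" "y < c"
  shows "\<not> blocker n (BQ n a b c - {{x, y}})"
proof (rule not_blocker_if_crossed_by_quadrilateral[of x a y c n "{x, y}"])
  show "BQ n a b c - {{x, y}} \<subseteq> diagonals n" using BQ_subset_diagonals assms(1-4) by blast
  fix f assume "f \<in> BQ n a b c - {{x, y}}"
  then have "f \<in> BQ n a b c" "f \<noteq> {x, y}" by auto
  then show "\<exists>g\<in>{{x, a}, {a, y}, {y, c}, {x, c}, {x, y}}. crosses f g"
    by (cases rule: BQ_memE) (use assms in \<open>auto simp: crosses_doubleton_iff\<close>)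
qed (use assms in auto)

lemma BQ_minus_TB_not_blocker:
  assumes "0 < a" "a < b" "b < c" "c < n - 1" "a \<le> u" "u < b" "c \<le> z" "z < n"
  shows "\<not> blocker n (BQ n a b c - {{u, z}})"
proof (rule not_blocker_if_crossed_by_quadrilateral[of 0 u b z n "{u, z}"])
  show "BQ n a b c - {{u, z}} \<subseteq> diagonals n" using BQ_subset_diagonals assms(1-4) by blast
  fix f assume "f \<in> BQ n a b c - {{u, z}}"
  then have "f \<in> BQ n a b c" "f \<noteq> {u, z}" by auto
  then show "\<exists>g\<in>{{0, u}, {u, b}, {b, z}, {0, z}, {u, z}}. crosses f g"
    by (cases rule: BQ_memE) (use assms in \<open>auto simp: crosses_doubleton_iff\<close>)
qed (use assms in auto)

lemma card_doubletons:
  assumes "A \<inter> B = {}"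
  shows "card {{i, j} | i j. i \<in> A \<and> j \<in> B} = card A * card B"
proof -
  have "{{i, j} | i j. i \<in> A \<and> j \<in> B} = (\<lambda>(i, j). {i, j}) ` (A \<times> B)" by auto
  moreover have "inj_on (\<lambda>(i, j). {i, j}) (A \<times> B)"
    using assms by (auto simp: inj_on_def doubleton_eq_iff)
  ultimately show ?thesis by (simp add: card_image card_cartesian_product)
qed

lemma card_BQ:
  assumes "0 < a" "a < b" "b < c" "c < n - 1"
  shows "card (BQ n a b c) = card {0..<a} * card {b..<c} + card {c..<n} * card {a..<b}"
proof -
  let ?RL = "{{i, j} | i j. i \<in> {0..<a} \<and> j \<in> {b..<c}}"
  and ?TB = "{{i, j} | i j. i \<in> {c..<n} \<and> j \<in> {a..<b}}"
  have "finite (?RL \<union> ?TB)"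
    using BQ_subset_diagonals[OF assms] finite_diagonals unfolding BQ_def by (rule finite_subset)
  moreover have "?RL \<inter> ?TB = {}" using assms by (auto simp: doubleton_eq_iff)
  ultimately have "card (BQ n a b c) = card ?RL + card ?TB"
    unfolding BQ_def by (simp add: card_Un_disjoint)
  moreover have "card ?RL = card {0..<a} * card {b..<c}"
    by (rule card_doubletons) (use assms in auto)
  moreover have "card ?TB = card {c..<n} * card {a..<b}"
    by (rule card_doubletons) (use assms in auto)
  ultimately show ?thesis by simp
qed

theorem proposition3p1:
  fixes n a b c :: nat
  assumes "0 < a" and "a < b" and "b < c" and "c < n - 1"
  shows "nk_blocker n
           (card {0..<a} * card {b..<c} + card {c..<n} * card {a..<b})
           ({{i, j} | i j. i \<in> {0..<a} \<and> j \<in> {b..<c}} \<union>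
            {{i, j} | i j. i \<in> {c..<n} \<and> j \<in> {a..<b}})"
proof -
  have "blocker n (BQ n a b c)"
    unfolding blocker_def using BQ_subset_diagonals BQ_meets_triangulation assms by blast
  moreover have "\<not> blocker n (BQ n a b c - {e})" if "e \<in> BQ n a b c" for e
    using that by (cases rule: BQ_memE)
      (use BQ_minus_RL_not_blocker[OF assms] BQ_minus_TB_not_blocker[OF assms] in auto)
  moreover have "finite (BQ n a b c)"
    using BQ_subset_diagonals[OF assms] finite_diagonals by (rule finite_subset)
  ultimately show ?thesis
    using card_BQ[OF assms] unfolding nk_blocker_def saturated_blocker_def BQ_def by blast
qed

end
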